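(* Let $S\subseteq X$, $\psi:S\to Z$ be $C$-convex, $x_0\in S$, $f=\psi^C$, and write $x_t=x_0+t(x-x_0)$. Suppose that for all $x\in S$ and $t\in(0,1)$, $$\psi(x_t)\ne\psi(x_0)\ \Longrightarrow\ \psi'(x_t,x_0-x)\not\subseteq C\cup C_\infty .$$ Then $x_0$ solves the set-valued Minty inequality for $f$ (for all $x\in X$ with $f(x)\ne f(x_0)$: $f'(x,x_0-x)\not\subseteq0^+f(x)$), and for all $x\in S$, $t\in(0,1)$: $$\psi(x_t)\neq\psi(x_0)\ \Longrightarrow\ \psi'(x_t,x_0-x)\subseteq (C\cap-C)_\infty\cup(Z\setminus C).$$
   Context: $X$ real linear space, $Z$ real locally convex Hausdorff space with dual $Z^*$, $C\subseteq Z$ closed convex cone, $0\in C$, $C^-=\{z^*:z^*(c)\le0\ \forall c\in C\}$, $C^-\setminus\{0\}\ne\emptyset$. $\psi:S\to Z$ is $C$-convex if $S$ is convex and $(1-t)\psi(x_1)+t\psi(x_2)\in\psi(x_1+t(x_2-x_1))+C$ for $x_1,x_2\in S$, $t\in(0,1)$. $f=\psi^C$: $f(x)=\psi(x)+C$ for $x\in S$, $\emptyset$ otherwise. $A\ominus B=\{z:B+\{z\}\subseteq A\}$; $0^+A=\{z:A+\{z\}\subseteq A\}$ for $A\ne\emptyset$, $0^+\emptyset=\emptyset$; $f'(x,u)=\bigcap_{t_0>0}\operatorname{cl}\operatorname{co}\bigcup_{0<t<t_0}\frac1t(f(x+tu)\ominus f(x))$. Extended space: for $z\in Z$, $z_\infty$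 denotes an infinite element in direction $z$, with $z_\infty=y_\infty$ iff $y=\lambda z$ for some $\lambda>0$, and $0_\infty=0$; $\tilde Z=Z\cup\{z_\infty:z\in Z\}$; for $A\subseteq Z$, $A_\infty=\{a_\infty:a\in A\setminus\{0\}\}$, $\operatorname{cone}A=\{ta:a\in A,t>0\}$. Topology on $\tilde Z$: for $z\in Z$, neighborhood base $\{z+U\}$ with $U$ ranging over closed convex balanced $0$-neighborhoods of $Z$; for $z\ne0$, neighborhood base of $z_\infty$: $(\{tz\}+\operatorname{cone}(U+\{z\}))\cup(U+\{z\})_\infty$, $t>0$, $U$ as before. Dini derivative: $\psi'(y,v)=\{\tilde z\in\tilde Z:\exists t_i\downarrow0 \text{ with } \frac1{t_i}(\psi(y+t_iv)-\psi(y))\to\tilde z\text{ in }\tilde Z\}$. *)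

theory Defs
  imports "HOL-Analysis.Analysis"
begin

(* Locally convex topological vector space structure on the type 'z
   (Hausdorffness is imposed separately through the class t2_space). *)
definition lctvs :: "'z::{real_vector,topological_space} itself \<Rightarrow> bool" where
  "lctvs _ \<longleftrightarrow>
     continuous_on UNIV (\<lambda>p::'z \<times> 'z. fst p + snd p) \<and>
     continuous_on UNIV (\<lambda>p::real \<times> 'z. fst p *\<^sub>R snd p) \<and>
     (\<forall>U::'z set. open U \<and> 0 \<in> U \<longrightarrow> (\<exists>V. open V \<and> convex V \<and> 0 \<in> V \<and> V \<subseteq> U))"

definition dual_space :: "('z::{real_vector,topological_space} \<Rightarrow> real) set" where
  "dual_space = {l. linear l \<and> continuous_on UNIV l}"

definition neg_polar :: "'z::{real_vector,topological_space} set \<Rightarrow> ('z \<Rightarrow> real) set" where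
  "neg_polar C = {l \<in> dual_space. \<forall>c\<in>C. l c \<le> 0}"

definition C_convex :: "'z::real_vector set \<Rightarrow> 'x::real_vector set \<Rightarrow> ('x \<Rightarrow> 'z) \<Rightarrow> bool" where
  "C_convex C S \<psi> \<longleftrightarrow> convex S \<and>
     (\<forall>x1\<in>S. \<forall>x2\<in>S. \<forall>t::real. 0 < t \<and> t < 1 \<longrightarrow>
        (1 - t) *\<^sub>R \<psi> x1 + t *\<^sub>R \<psi> x2 \<in> {\<psi> (x1 + t *\<^sub>R (x2 - x1)) + c | c. c \<in> C})"

definition psiC :: "'z::real_vector set \<Rightarrow> 'x set \<Rightarrow> ('x \<Rightarrow> 'z) \<Rightarrow> 'x \<Rightarrow> 'z set" where
  "psiC C S \<psi> x = (if x \<in> S then {\<psi> x + c | c. c \<in> C} else {})"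

definition mdiff :: "'z::real_vector set \<Rightarrow> 'z set \<Rightarrow> 'z set" where
  "mdiff A B = {z. (\<lambda>b. b + z) ` B \<subseteq> A}"

definition rec_cone :: "'z::real_vector set \<Rightarrow> 'z set" where
  "rec_cone A = (if A = {} then {} else {z. (\<lambda>a. a + z) ` A \<subseteq> A})"

definition sv_deriv :: "('x::real_vector \<Rightarrow> 'z::{real_vector,topological_space} set) \<Rightarrow> 'x \<Rightarrow> 'x \<Rightarrow> 'z set" where
  "sv_deriv f x u = (\<Inter>t0\<in>{t0::real. 0 < t0}.
      closure (convex hull (\<Union>t\<in>{t. 0 < t \<and> t < t0}. (\<lambda>z. (1 / t) *\<^sub>R z) ` mdiff (f (x + t *\<^sub>R u)) (f x))))"

definition minty_sol :: "('x::real_vector \<Rightarrow> 'z::{real_vector,topological_space} set) \<Rightarrow> 'x \<Rightarrow> bool" where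
  "minty_sol f x0 \<longleftrightarrow> (\<forall>x. f x \<noteq> f x0 \<longrightarrow> \<not> sv_deriv f x (x0 - x) \<subseteq> rec_cone (f x))"

(* Extended space: Fin z is the point z of Z, Dir z (z \<noteq> 0) is the infinite
   element z_\<infinity>.  Dir z and Dir (\<lambda> z) (\<lambda> > 0) represent the same element;
   all sets of extended elements used below are closed under this identification. *)
datatype 'z ext = Fin 'z | Dir 'z

definition ccb_nhd :: "'z::{real_vector,topological_space} set \<Rightarrow> bool" where
  "ccb_nhd U \<longleftrightarrow> (\<exists>V. open V \<and> 0 \<in> V \<and> V \<subseteq> U) \<and> closed U \<and> convex U \<and>
     (\<forall>a::real. \<bar>a\<bar> \<le> 1 \<longrightarrow> (\<lambda>u. a *\<^sub>R u) ` U \<subseteq> U)"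

definition pos_cone :: "'z::real_vector set \<Rightarrow> 'z set" where
  "pos_cone A = {t *\<^sub>R a | t a. t > 0 \<and> a \<in> A}"

definition ext_conv :: "(nat \<Rightarrow> 'z::{real_vector,topological_space}) \<Rightarrow> 'z ext \<Rightarrow> bool" where
  "ext_conv w e = (case e of
      Fin z \<Rightarrow> (w \<longlongrightarrow> z) sequentially
    | Dir z \<Rightarrow> z \<noteq> 0 \<and>
        (\<forall>t::real. \<forall>U. t > 0 \<and> ccb_nhd U \<longrightarrow>
           eventually (\<lambda>i. w i \<in> {t *\<^sub>R z + p | p. p \<in> pos_cone ((\<lambda>u. u + z) ` U)}) sequentially))"

definition dini :: "('x::real_vector \<Rightarrow> 'z::{real_vector,topological_space}) \<Rightarrow> 'x \<Rightarrow> 'x \<Rightarrow> 'z ext set" where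
  "dini \<psi> y v = {e. \<exists>s::nat \<Rightarrow> real. (\<forall>i. s i > 0) \<and> decseq s \<and> (s \<longlonglongrightarrow> 0) \<and>
        ext_conv (\<lambda>i. (1 / s i) *\<^sub>R (\<psi> (y + s i *\<^sub>R v) - \<psi> y)) e}"

definition fin_part :: "'z set \<Rightarrow> 'z ext set" where
  "fin_part A = Fin ` A"

definition inf_part :: "'z::zero set \<Rightarrow> 'z ext set" where
  "inf_part A = Dir ` (A - {0})"

end

theory Submission
  imports Defs
begin

text \<open>Along a segment, \<open>C\<close>-convexity of \<open>\<psi>\<close> makes the difference quotients
  \<open>s \<mapsto> (\<psi> (y + s v) - \<psi> y) / s\<close> monotone for the order induced by \<open>C\<close>, and bounds them from
  below by the backward quotient \<open>(\<psi> y - \<psi> x) / a\<close> whenever \<open>y = x + a v\<close>. Hence any two finite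
  Dini derivatives are comparable, and every infinite one is squeezed into the lineality space
  \<open>C \<inter> - C\<close>; so once some Dini derivative at \<open>x\<^sub>t\<close> lies outside \<open>C \<union> C\<^sub>\<infinity>\<close>, no finite one
  lies in \<open>C\<close>.

  For the Minty inequality at \<open>x \<in> S\<close>, the quotients of \<open>\<psi>\<close> at \<open>x\<close> belong to \<open>f'(x, x0 - x)\<close>,
  while \<open>0\<^sup>+ f(x) = C\<close>. If the quotient at \<open>1/2\<close> were in \<open>C\<close>, then at the midpoint \<open>m\<close> either
  \<open>\<psi> m = \<psi> x0\<close>, forcing \<open>f x = f x0\<close>, or all quotients at \<open>m\<close> dominate it, making
  \<open>\<psi>'(m, x0 - x) \<subseteq> C \<union> C\<^sub>\<infinity>\<close>. Outside \<open>S\<close>, \<open>f x = {}\<close>, so \<open>0\<^sup>+ f(x) = {}\<close> while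
  \<open>0 \<in> f'(x, x0 - x)\<close>.\<close>

section \<open>Difference quotients of \<open>C\<close>-convex maps\<close>

definition diff_quot :: "('x::real_vector \<Rightarrow> 'z::real_vector) \<Rightarrow> 'x \<Rightarrow> 'x \<Rightarrow> real \<Rightarrow> 'z" where
  "diff_quot \<psi> y v s = (1 / s) *\<^sub>R (\<psi> (y + s *\<^sub>R v) - \<psi> y)"

lemma C_convex_imp_convex: "C_convex C S \<psi> \<Longrightarrow> convex S"
  by (simp add: C_convex_def)

lemma C_convexD:
  assumes "C_convex C S \<psi>" "x1 \<in> S" "x2 \<in> S" "0 < t" "t < 1"
  shows "(1 - t) *\<^sub>R \<psi> x1 + t *\<^sub>R \<psi> x2 - \<psi> (x1 + t *\<^sub>R (x2 - x1)) \<in> C"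
proof -
  obtain c where "c \<in> C" "(1 - t) *\<^sub>R \<psi> x1 + t *\<^sub>R \<psi> x2 = \<psi> (x1 + t *\<^sub>R (x2 - x1)) + c"
    using assms unfolding C_convex_def by blast
  then show ?thesis
    by (simp add: algebra_simps)
qed

lemma convex_segment_mem:
  assumes "convex S" "p \<in> S" "q \<in> S" "0 \<le> l" "l \<le> 1"
  shows "p + l *\<^sub>R (q - p) \<in> S"
  using convexD_alt[OF assms] by (simp add: algebra_simps)

lemma diff_quot_mono:
  assumes "C_convex C S \<psi>" "convex_cone C" "y \<in> S" "y + T *\<^sub>R v \<in> S"
    and "0 < s" "s \<le> s'" "s' \<le> T"
  shows "diff_quot \<psi> y v s' - diff_quot \<psi> y v s \<in> C"
proof (cases "s = s'")
  case True
  then show ?thesis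
    using assms(2) convex_cone_contains_0 by simp
next
  case False
  have "convex S"
    using assms(1) by (rule C_convex_imp_convex)
  have "y + (s' / T) *\<^sub>R ((y + T *\<^sub>R v) - y) \<in> S"
    using assms by (intro convex_segment_mem[OF \<open>convex S\<close>]) auto
  then have "y + s' *\<^sub>R v \<in> S"
    using assms by simp
  moreover have "y + (s / s') *\<^sub>R ((y + s' *\<^sub>R v) - y) = y + s *\<^sub>R v"
    using assms by simp
  ultimately have "(1 - s / s') *\<^sub>R \<psi> y + (s / s') *\<^sub>R \<psi> (y + s' *\<^sub>R v) - \<psi> (y + s *\<^sub>R v) \<in> C"
    using C_convexD[OF assms(1,3), of "y + s' *\<^sub>R v" "s / s'"] assms False by simp
  then have "(1 / s) *\<^sub>R ((1 - s / s') *\<^sub>R \<psi> y + (s / s') *\<^sub>R \<psi> (y + s' *\<^sub>R v) - \<psi> (y + s *\<^sub>R v)) \<in> C"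
    using assms(2,5) by (intro convex_cone_scaleR) auto
  moreover have "(1 / s) *\<^sub>R ((1 - s / s') *\<^sub>R \<psi> y + (s / s') *\<^sub>R \<psi> (y + s' *\<^sub>R v) - \<psi> (y + s *\<^sub>R v))
      = diff_quot \<psi> y v s' - diff_quot \<psi> y v s"
    using assms by (simp add: diff_quot_def algebra_simps diff_divide_distrib scaleR_diff_left)
  ultimately show ?thesis
    by simp
qed

lemma diff_quot_ge_backward_quot:
  assumes "C_convex C S \<psi>" "convex_cone C" "x \<in> S" "y + T *\<^sub>R v \<in> S" "y = x + a *\<^sub>R v"
    and "0 < a" "0 < s" "s \<le> T"
  shows "diff_quot \<psi> y v s - (1 / a) *\<^sub>R (\<psi> y - \<psi> x) \<in> C"
proof -
  have "convex S"
    using assms(1) by (rule C_convex_imp_convex)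
  have seg: "(y + T *\<^sub>R v) - x = (a + T) *\<^sub>R v" "y + s *\<^sub>R v = x + (a + s) *\<^sub>R v"
    "(y + s *\<^sub>R v) - x = (a + s) *\<^sub>R v"
    using assms(5) by (simp_all add: algebra_simps)
  have "a + T \<noteq> 0" "a + s \<noteq> 0"
    using assms(6-8) by simp_all
  have "x + ((a + s) / (a + T)) *\<^sub>R ((y + T *\<^sub>R v) - x) \<in> S"
    using assms by (intro convex_segment_mem[OF \<open>convex S\<close>]) auto
  then have "y + s *\<^sub>R v \<in> S"
    using seg(1,2) \<open>a + T \<noteq> 0\<close> by simp
  moreover have "x + (a / (a + s)) *\<^sub>R ((y + s *\<^sub>R v) - x) = y"
    unfolding seg(3) using \<open>a + s \<noteq> 0\<close> assms(5) by simp
  ultimately have "(1 - a / (a + s)) *\<^sub>R \<psi> x + (a / (a + s)) *\<^sub>R \<psi> (y + s *\<^sub>R v) - \<psi> y \<in> C"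
    using C_convexD[OF assms(1,3), of "y + s *\<^sub>R v" "a / (a + s)"] assms by simp
  then have "((a + s) / (a * s)) *\<^sub>R
      ((1 - a / (a + s)) *\<^sub>R \<psi> x + (a / (a + s)) *\<^sub>R \<psi> (y + s *\<^sub>R v) - \<psi> y) \<in> C"
    using assms(2,6,7) by (intro convex_cone_scaleR) auto
  moreover have "((a + s) / (a * s)) *\<^sub>R
      ((1 - a / (a + s)) *\<^sub>R \<psi> x + (a / (a + s)) *\<^sub>R \<psi> (y + s *\<^sub>R v) - \<psi> y)
      = diff_quot \<psi> y v s - (1 / a) *\<^sub>R (\<psi> y - \<psi> x)"
  proof -
    have "(a + s) / (a * s) * (1 - a / (a + s)) = 1 / a" "(a + s) / (a * s) * (a / (a + s)) = 1 / s"
      "(a + s) / (a * s) = 1 / s + 1 / a"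
      using assms(6,7) by (simp_all add: divide_simps)
    then show ?thesis
      by (simp add: diff_quot_def scaleR_diff_right scaleR_add_right scaleR_add_left algebra_simps)
  qed
  ultimately show ?thesis
    by simp
qed

section \<open>The directional derivative of \<open>\<psi>\<^sup>C\<close>\<close>

lemma sv_deriv_memI:
  assumes "0 < r" "\<And>s. 0 < s \<Longrightarrow> s < r \<Longrightarrow> s *\<^sub>R z \<in> mdiff (f (x + s *\<^sub>R u)) (f x)"
  shows "z \<in> sv_deriv f x u"
  unfolding sv_deriv_def
proof (intro InterI, clarsimp)
  fix t0 :: real assume "0 < t0"
  define s where "s = min r t0 / 2"
  have s: "0 < s" "s < r" "s < t0"
    using assms(1) \<open>0 < t0\<close> unfolding s_def by auto
  have "z \<in> (\<lambda>z. (1 / s) *\<^sub>R z) ` mdiff (f (x + s *\<^sub>R u)) (f x)"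
    using assms(2)[OF s(1,2)] s(1) by (intro rev_image_eqI[of "s *\<^sub>R z"]) auto
  then have "z \<in> (\<Union>t\<in>{t. 0 < t \<and> t < t0}. (\<lambda>z. (1 / t) *\<^sub>R z) ` mdiff (f (x + t *\<^sub>R u)) (f x))"
    using s by blast
  then show "z \<in> closure (convex hull (\<Union>t\<in>{t. 0 < t \<and> t < t0}. (\<lambda>z. (1 / t) *\<^sub>R z) ` mdiff (f (x + t *\<^sub>R u)) (f x)))"
    by (meson closure_subset hull_inc subsetD)
qed

lemma zero_mem_sv_deriv_if_empty:
  assumes "f x = {}"
  shows "0 \<in> sv_deriv f x u"
  by (rule sv_deriv_memI[of 1]) (simp_all add: assms mdiff_def)

lemma psiC_subset_psiC:
  assumes "convex_cone C" "x \<in> S" "y \<in> S" "\<psi> x + z - \<psi> y \<in> C"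
  shows "(\<lambda>b. b + z) ` psiC C S \<psi> x \<subseteq> psiC C S \<psi> y"
proof
  fix b assume "b \<in> (\<lambda>b. b + z) ` psiC C S \<psi> x"
  then obtain c where "c \<in> C" "b = \<psi> x + c + z"
    using assms(2) by (auto simp: psiC_def)
  moreover have "(\<psi> x + z - \<psi> y) + c \<in> C"
    using convex_cone_add[OF assms(1,4) \<open>c \<in> C\<close>] .
  ultimately show "b \<in> psiC C S \<psi> y"
    using assms(3) unfolding psiC_def by (auto intro!: exI[of _ "\<psi> x + z - \<psi> y + c"])
qed

lemma rec_cone_psiC_subset:
  assumes "0 \<in> C" "x \<in> S"
  shows "rec_cone (psiC C S \<psi> x) \<subseteq> C"
proof
  fix z assume "z \<in> rec_cone (psiC C S \<psi> x)"
  moreover have "\<psi> x \<in> psiC C S \<psi> x"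
    using assms by (force simp: psiC_def)
  ultimately have "\<psi> x + z \<in> psiC C S \<psi> x"
    by (auto simp: rec_cone_def split: if_splits)
  then show "z \<in> C"
    using assms(2) by (auto simp: psiC_def)
qed

lemma diff_quot_mem_sv_deriv_psiC:
  assumes "C_convex C S \<psi>" "convex_cone C" "x \<in> S" "x + r *\<^sub>R u \<in> S" "0 < r"
  shows "diff_quot \<psi> x u r \<in> sv_deriv (psiC C S \<psi>) x u"
proof (rule sv_deriv_memI[OF \<open>0 < r\<close>])
  fix s assume s: "0 < s" "s < r"
  have "convex S"
    using assms(1) by (rule C_convex_imp_convex)
  have "r \<noteq> 0"
    using assms(5) by simp
  then have eq: "x + (s / r) *\<^sub>R ((x + r *\<^sub>R u) - x) = x + s *\<^sub>R u"
    by simp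
  have "x + s *\<^sub>R u \<in> S"
    using convex_segment_mem[OF \<open>convex S\<close> assms(3,4), of "s / r"] s eq by simp
  have "(1 - s / r) *\<^sub>R \<psi> x + (s / r) *\<^sub>R \<psi> (x + r *\<^sub>R u) - \<psi> (x + s *\<^sub>R u) \<in> C"
    using C_convexD[OF assms(1,3,4), of "s / r"] s eq by simp
  moreover have "(1 - s / r) *\<^sub>R \<psi> x + (s / r) *\<^sub>R \<psi> (x + r *\<^sub>R u) = \<psi> x + s *\<^sub>R diff_quot \<psi> x u r"
    using \<open>r \<noteq> 0\<close> by (simp add: diff_quot_def algebra_simps)
  ultimately have "\<psi> x + s *\<^sub>R diff_quot \<psi> x u r - \<psi> (x + s *\<^sub>R u) \<in> C"
    by simp
  then show "s *\<^sub>R diff_quot \<psi> x u r \<in> mdiff (psiC C S \<psi> (x + s *\<^sub>R u)) (psiC C S \<psi> x)"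
    using psiC_subset_psiC[OF assms(2,3) \<open>x + s *\<^sub>R u \<in> S\<close>] by (simp add: mdiff_def)
qed

section \<open>Locally convex spaces\<close>

lemma open_square_nhd_vimage:
  fixes g :: "'a::topological_space \<times> 'a \<Rightarrow> 'b::topological_space"
  assumes "continuous_on UNIV g" "open N" "g (p, p) \<in> N"
  obtains V where "open V" "p \<in> V" "V \<times> V \<subseteq> g -` N"
proof -
  have "open (g -` N)" "(p, p) \<in> g -` N"
    using assms open_vimage by auto
  then obtain A B where "open A" "open B" "(p, p) \<in> A \<times> B" "A \<times> B \<subseteq> g -` N"
    by (rule open_prod_elim)
  then show ?thesis
    using that[of "A \<inter> B"] by blast
qed

lemma tendsto_closed_vimage:
  assumes "closed T" "continuous_on UNIV g" "(w \<longlongrightarrow> l) sequentially"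
    and "eventually (\<lambda>n. g (w n) \<in> T) sequentially"
  shows "g l \<in> T"
  using Lim_in_closed_set[of "g -` T" w sequentially l] closed_vimage assms by auto

lemma convex_symmetric_scaleR_mem:
  assumes "convex W" "\<And>u. u \<in> W \<Longrightarrow> - u \<in> W" "\<bar>a\<bar> \<le> 1" "u \<in> W"
  shows "a *\<^sub>R u \<in> W"
proof -
  have "((1 + a) / 2) *\<^sub>R u + ((1 - a) / 2) *\<^sub>R (- u) \<in> W"
    using assms by (intro convexD) (auto simp: field_simps)
  moreover have "((1 + a) / 2) *\<^sub>R u + ((1 - a) / 2) *\<^sub>R (- u) = a *\<^sub>R u"
    by (simp add: scaleR_diff_left [symmetric] field_simps)
  ultimately show ?thesis
    by simp
qed

context
  fixes type_z :: "'z::{real_vector,topological_space} itself"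
  assumes lctvs: "lctvs TYPE('z)"
begin

lemma lctvs_continuous_on_add:
  fixes f g :: "'a::topological_space \<Rightarrow> 'z"
  assumes "continuous_on A f" "continuous_on A g"
  shows "continuous_on A (\<lambda>x. f x + g x)"
proof -
  have "continuous_on UNIV (\<lambda>p::'z \<times> 'z. fst p + snd p)"
    using lctvs unfolding lctvs_def by blast
  then show ?thesis
    using continuous_on_compose2[OF _ continuous_on_Pair[OF assms]] by fastforce
qed

lemma lctvs_continuous_on_scaleR:
  fixes f :: "'a::topological_space \<Rightarrow> real" and g :: "'a \<Rightarrow> 'z"
  assumes "continuous_on A f" "continuous_on A g"
  shows "continuous_on A (\<lambda>x. f x *\<^sub>R g x)"
proof -
  have "continuous_on UNIV (\<lambda>p::real \<times> 'z. fst p *\<^sub>R snd p)"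
    using lctvs unfolding lctvs_def by blast
  then show ?thesis
    using continuous_on_compose2[OF _ continuous_on_Pair[OF assms]] by fastforce
qed

lemma lctvs_continuous_on_diff:
  fixes f g :: "'a::topological_space \<Rightarrow> 'z"
  assumes "continuous_on A f" "continuous_on A g"
  shows "continuous_on A (\<lambda>x. f x - g x)"
  using lctvs_continuous_on_add[OF assms(1) lctvs_continuous_on_scaleR[OF continuous_on_const assms(2)],
      of "-1"]
  by simp

lemma closure_subset_of_differences:
  fixes V :: "'z set"
  assumes "open V" "0 \<in> V" "\<And>p q. p \<in> V \<Longrightarrow> q \<in> V \<Longrightarrow> p - q \<in> N"
  shows "closure V \<subseteq> N"
proof
  fix x assume "x \<in> closure V"
  have "open ((\<lambda>y. y - x) -` V)"
    using assms(1) by (intro open_vimage lctvs_continuous_on_diff continuous_on_id continuous_on_const)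
  moreover have "x \<in> (\<lambda>y. y - x) -` V"
    using assms(2) by simp
  ultimately have "(\<lambda>y. y - x) -` V \<inter> V \<noteq> {}"
    using open_Int_closure_eq_empty \<open>x \<in> closure V\<close> by blast
  then obtain y where "y \<in> V" "y - x \<in> V"
    by blast
  then show "x \<in> N"
    using assms(3)[of y "y - x"] by simp
qed

lemma lctvs_convex_closure:
  fixes W :: "'z set"
  assumes "convex W"
  shows "convex (closure W)"
  unfolding convex_def
proof (intro ballI allI impI)
  fix x y u v assume "x \<in> closure W" "y \<in> closure W" "0 \<le> u" "0 \<le> v" "u + v = (1::real)"
  let ?g = "\<lambda>p. u *\<^sub>R fst p + v *\<^sub>R snd p"
  have "continuous_on (closure (W \<times> W)) ?g"
    by (intro lctvs_continuous_on_add lctvs_continuous_on_scaleR continuous_on_const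
        continuous_on_fst[OF continuous_on_id] continuous_on_snd[OF continuous_on_id])
  moreover have "?g ` (W \<times> W) \<subseteq> closure W"
  proof
    fix z assume "z \<in> ?g ` (W \<times> W)"
    then obtain p q where "p \<in> W" "q \<in> W" "z = u *\<^sub>R p + v *\<^sub>R q"
      by auto
    then show "z \<in> closure W"
      using convexD[OF assms _ _ \<open>0 \<le> u\<close> \<open>0 \<le> v\<close> \<open>u + v = 1\<close>] closure_subset by blast
  qed
  ultimately have "?g ` closure (W \<times> W) \<subseteq> closure W"
    by (rule image_closure_subset[OF _ closed_closure])
  moreover have "(x, y) \<in> closure (W \<times> W)"
    using \<open>x \<in> closure W\<close> \<open>y \<in> closure W\<close> by (simp add: closure_Times)
  ultimately show "u *\<^sub>R x + v *\<^sub>R y \<in> closure W"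
    by (metis (no_types, lifting) image_subset_iff fst_conv snd_conv)
qed

lemma lctvs_scaleR_closure_subset:
  fixes W :: "'z set"
  assumes "(\<lambda>u. a *\<^sub>R u) ` W \<subseteq> W"
  shows "(\<lambda>u. a *\<^sub>R u) ` closure W \<subseteq> closure W"
proof (rule image_closure_subset)
  show "continuous_on (closure W) (\<lambda>u. a *\<^sub>R u)"
    using lctvs_continuous_on_scaleR[OF continuous_on_const continuous_on_id] .
  show "(\<lambda>u. a *\<^sub>R u) ` W \<subseteq> closure W"
    using assms closure_subset by blast
qed simp

lemma ccb_nhd_exists:
  fixes N :: "'z set"
  assumes "open N" "0 \<in> N"
  obtains U where "ccb_nhd U" "U \<subseteq> N"
proof -
  have "continuous_on UNIV (\<lambda>p::'z \<times> 'z. fst p - snd p)"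
    by (intro lctvs_continuous_on_diff continuous_on_fst[OF continuous_on_id]
        continuous_on_snd[OF continuous_on_id])
  moreover have "(\<lambda>p. fst p - snd p) (0, 0) \<in> N"
    using assms(2) by simp
  ultimately obtain V where V: "open V" "0 \<in> V" "V \<times> V \<subseteq> (\<lambda>p. fst p - snd p) -` N"
    using open_square_nhd_vimage assms(1) by blast
  then have V_diff: "\<And>p q. p \<in> V \<Longrightarrow> q \<in> V \<Longrightarrow> p - q \<in> N"
    by auto
  obtain W where W: "open W" "convex W" "0 \<in> W" "W \<subseteq> V"
    using lctvs V(1,2) unfolding lctvs_def by blast
  define B where "B = W \<inter> uminus -` W"
  have "continuous_on UNIV (\<lambda>u::'z. (-1) *\<^sub>R u)"
    by (intro lctvs_continuous_on_scaleR continuous_on_const continuous_on_id)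
  then have "open B"
    unfolding B_def using W(1) by (intro open_Int open_vimage) auto
  have "convex B"
    unfolding B_def by (intro convex_Int W(2) convex_linear_vimage linear_uminus)
  have balanced: "(\<lambda>u. a *\<^sub>R u) ` B \<subseteq> B" if "\<bar>a\<bar> \<le> 1" for a
    using convex_symmetric_scaleR_mem[OF \<open>convex B\<close> _ that] by (auto simp: B_def)
  have "0 \<in> B"
    using W(3) by (simp add: B_def)
  have "closure B \<subseteq> closure V"
    using W(4) by (intro closure_mono) (auto simp: B_def)
  then have "closure B \<subseteq> N"
    using closure_subset_of_differences[OF V(1,2) V_diff] by blast
  moreover have "ccb_nhd (closure B)"
    unfolding ccb_nhd_def
    using \<open>open B\<close> \<open>0 \<in> B\<close> closure_subset[of B] lctvs_convex_closure[OF \<open>convex B\<close>]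
      lctvs_scaleR_closure_subset[OF balanced]
    by blast
  ultimately show ?thesis
    using that by blast
qed

text \<open>If \<open>z \<notin> D\<close>, take a ccb-neighbourhood \<open>U\<close> with \<open>z + U + U \<subseteq> - D\<close> and \<open>r > 0\<close> with
  \<open>- r a \<in> U\<close>. Some \<open>w i = z / r + s (u + z)\<close> satisfies \<open>w i - a \<in> D\<close>; rescaling by
  \<open>k = 1 / (1 / r + s)\<close> gives \<open>z + k s u + (k / r) (- r a) \<in> D\<close>, and balancedness of \<open>U\<close>
  puts both summands into \<open>U\<close>.\<close>

lemma ext_conv_Dir_mem_cone:
  assumes D: "closed D" "cone D" and conv: "ext_conv w (Dir z)"
    and ev: "eventually (\<lambda>i. w i - a \<in> D) sequentially"
  shows "(z::'z) \<in> D"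
proof (rule ccontr)
  assume "z \<notin> D"
  define N where "N = (\<lambda>v. z + v) -` (- D)"
  have "open N"
    unfolding N_def using D(1)
    by (intro open_vimage lctvs_continuous_on_add continuous_on_const continuous_on_id) auto
  moreover have "continuous_on UNIV (\<lambda>p::'z \<times> 'z. fst p + snd p)"
    by (intro lctvs_continuous_on_add continuous_on_fst[OF continuous_on_id]
        continuous_on_snd[OF continuous_on_id])
  moreover have "(\<lambda>p. fst p + snd p) (0, 0) \<in> N"
    using \<open>z \<notin> D\<close> by (simp add: N_def)
  ultimately obtain V where V: "open V" "0 \<in> V" "V \<times> V \<subseteq> (\<lambda>p. fst p + snd p) -` N"
    using open_square_nhd_vimage by blast
  then have V_sum: "\<And>p q. p \<in> V \<Longrightarrow> q \<in> V \<Longrightarrow> p + q \<in> N"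
    by auto
  obtain U where U: "ccb_nhd U" "U \<subseteq> V"
    using ccb_nhd_exists V(1,2) by blast
  obtain U0 where U0: "open U0" "0 \<in> U0" "U0 \<subseteq> U"
    using U(1) unfolding ccb_nhd_def by blast
  have balanced: "\<And>c u. \<bar>c\<bar> \<le> 1 \<Longrightarrow> u \<in> U \<Longrightarrow> c *\<^sub>R u \<in> U"
    using U(1) unfolding ccb_nhd_def by blast
  have "open ((\<lambda>r::real. r *\<^sub>R (- a)) -` U0)"
    by (intro open_vimage[OF U0(1)] lctvs_continuous_on_scaleR continuous_on_id continuous_on_const)
  moreover have "(0::real) \<in> (\<lambda>r::real. r *\<^sub>R (- a)) -` U0"
    using U0(2) by simp
  ultimately obtain e where "e > 0" "ball 0 e \<subseteq> (\<lambda>r::real. r *\<^sub>R (- a)) -` U0"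
    by (rule openE)
  define r where "r = e / 2"
  have "r \<in> ball 0 e"
    using \<open>e > 0\<close> unfolding r_def by simp
  then have r: "r > 0" "r *\<^sub>R (- a) \<in> U"
    using \<open>e > 0\<close> \<open>ball 0 e \<subseteq> _\<close> U0(3) unfolding r_def by (simp, blast)
  have "eventually (\<lambda>i. w i \<in> {(1 / r) *\<^sub>R z + p | p. p \<in> pos_cone ((\<lambda>u. u + z) ` U)}) sequentially"
    using conv r(1) U(1) unfolding ext_conv_def by simp
  from eventually_happens'[OF trivial_limit_sequentially eventually_conj[OF this ev]]
  obtain i where "w i \<in> {(1 / r) *\<^sub>R z + p | p. p \<in> pos_cone ((\<lambda>u. u + z) ` U)}"
    and wi: "w i - a \<in> D"
    by (elim exE conjE)
  then obtain p where "p \<in> pos_cone ((\<lambda>u. u + z) ` U)" "w i = (1 / r) *\<^sub>R z + p"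
    by blast
  then obtain s u where su: "s > 0" "u \<in> U" "w i = (1 / r) *\<^sub>R z + s *\<^sub>R (u + z)"
    unfolding pos_cone_def by auto
  define k where "k = 1 / (1 / r + s)"
  have "1 / r + s > 0"
    using r(1) su(1) by (intro add_pos_pos) auto
  then have k: "k > 0" "k * (1 / r + s) = 1"
    unfolding k_def by auto
  have "\<bar>k * s\<bar> \<le> 1" "\<bar>k / r\<bar> \<le> 1"
  proof -
    have "k * s + k / r = 1" "0 < k * s" "0 < k / r"
      using k r(1) su(1) by (simp_all add: algebra_simps)
    then show "\<bar>k * s\<bar> \<le> 1" "\<bar>k / r\<bar> \<le> 1"
      unfolding abs_le_iff by linarith+
  qed
  then have "(k * s) *\<^sub>R u \<in> V" "(k / r) *\<^sub>R (r *\<^sub>R (- a)) \<in> V"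
    using balanced su(2) r(2) U(2) by blast+
  then have "(k * s) *\<^sub>R u + (k / r) *\<^sub>R (r *\<^sub>R (- a)) \<in> N"
    by (rule V_sum)
  moreover have "k *\<^sub>R (w i - a) = z + ((k * s) *\<^sub>R u + (k / r) *\<^sub>R (r *\<^sub>R (- a)))"
  proof -
    have "k *\<^sub>R (w i - a) = (k * (1 / r + s)) *\<^sub>R z + ((k * s) *\<^sub>R u + (k / r) *\<^sub>R (r *\<^sub>R (- a)))"
      using r by (simp add: su algebra_simps)
    then show ?thesis
      using k by simp
  qed
  moreover have "k *\<^sub>R (w i - a) \<in> D"
    using D(2) wi k unfolding cone_def by simp
  ultimately show False
    by (simp add: N_def)
qed

lemma mono_tendsto_diff_mem:
  fixes Q :: "real \<Rightarrow> 'z"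
  assumes "closed C" "T > 0"
    and mono: "\<And>s s'. 0 < s \<Longrightarrow> s \<le> s' \<Longrightarrow> s' < T \<Longrightarrow> Q s' - Q s \<in> C"
    and "\<And>i. \<sigma> i > 0" "\<And>i. \<tau> i > 0" "\<sigma> \<longlonglongrightarrow> 0" "\<tau> \<longlonglongrightarrow> 0"
    and "(\<lambda>i. Q (\<sigma> i)) \<longlonglongrightarrow> z" "(\<lambda>i. Q (\<tau> i)) \<longlonglongrightarrow> w"
  shows "z - w \<in> C"
proof -
  have "eventually (\<lambda>i. Q (\<sigma> i) - w \<in> C) sequentially"
    using order_tendstoD(2)[OF \<open>\<sigma> \<longlonglongrightarrow> 0\<close> \<open>T > 0\<close>]
  proof (rule eventually_mono)
    fix i assume "\<sigma> i < T"
    have "eventually (\<lambda>j. Q (\<sigma> i) - Q (\<tau> j) \<in> C) sequentially"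
      using order_tendstoD(2)[OF \<open>\<tau> \<longlonglongrightarrow> 0\<close> \<open>\<sigma> i > 0\<close>]
      by (rule eventually_mono) (use mono assms(5) \<open>\<sigma> i < T\<close> in auto)
    then show "Q (\<sigma> i) - w \<in> C"
      using tendsto_closed_vimage[OF \<open>closed C\<close> _ \<open>(\<lambda>i. Q (\<tau> i)) \<longlonglongrightarrow> w\<close>, of "\<lambda>x. Q (\<sigma> i) - x"]
      by (simp add: lctvs_continuous_on_diff)
  qed
  then show ?thesis
    using tendsto_closed_vimage[OF \<open>closed C\<close> _ \<open>(\<lambda>i. Q (\<sigma> i)) \<longlonglongrightarrow> z\<close>, of "\<lambda>x. x - w"]
    by (simp add: lctvs_continuous_on_diff)
qed

section \<open>Dini derivatives\<close>

lemma dini_diff_quot: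
  "dini \<psi> y v = {e. \<exists>\<sigma>. (\<forall>i. \<sigma> i > 0) \<and> decseq \<sigma> \<and> \<sigma> \<longlonglongrightarrow> 0 \<and>
                       ext_conv (\<lambda>i. diff_quot \<psi> y v (\<sigma> i)) e}"
  by (simp add: dini_def diff_quot_def)

lemma dini_Dir_nonzero: "Dir z \<in> dini \<psi> y v \<Longrightarrow> z \<noteq> 0"
  by (auto simp: dini_def ext_conv_def)

lemma dini_Dir_mem_cone:
  assumes "closed D" "cone D" "0 < T"
    and "\<And>s. 0 < s \<Longrightarrow> s \<le> T \<Longrightarrow> diff_quot \<psi> y v s - a \<in> D"
    and "Dir z \<in> dini \<psi> y v"
  shows "(z::'z) \<in> D"
proof -
  obtain \<sigma> where \<sigma>: "\<forall>i. \<sigma> i > 0" "\<sigma> \<longlonglongrightarrow> 0" and conv: "ext_conv (\<lambda>i. diff_quot \<psi> y v (\<sigma> i)) (Dir z)"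
    using assms(5) unfolding dini_diff_quot by blast
  have "eventually (\<lambda>i. diff_quot \<psi> y v (\<sigma> i) - a \<in> D) sequentially"
    using order_tendstoD(2)[OF \<sigma>(2) \<open>0 < T\<close>] by eventually_elim (use assms(4) \<sigma>(1) in auto)
  then show ?thesis
    by (rule ext_conv_Dir_mem_cone[OF assms(1,2) conv])
qed

lemma dini_subset_cone:
  assumes "closed D" "cone D" "0 < T"
    and "\<And>s. 0 < s \<Longrightarrow> s \<le> T \<Longrightarrow> diff_quot \<psi> y v s \<in> D"
  shows "dini \<psi> y v \<subseteq> fin_part D \<union> inf_part (D :: 'z set)"
proof
  fix e assume e: "e \<in> dini \<psi> y v"
  show "e \<in> fin_part D \<union> inf_part D"
  proof (cases e)
    case (Fin z)
    obtain \<sigma> where \<sigma>: "\<forall>i. \<sigma> i > 0" "\<sigma> \<longlonglongrightarrow> 0" and "(\<lambda>i. diff_quot \<psi> y v (\<sigma> i)) \<longlonglongrightarrow> z"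
      using e unfolding Fin dini_diff_quot by (auto simp: ext_conv_def)
    moreover have "eventually (\<lambda>i. diff_quot \<psi> y v (\<sigma> i) \<in> D) sequentially"
      using order_tendstoD(2)[OF \<sigma>(2) \<open>0 < T\<close>] by eventually_elim (use assms(4) \<sigma>(1) in auto)
    ultimately have "z \<in> D"
      using tendsto_closed_vimage[OF \<open>closed D\<close> continuous_on_id] by auto
    then show ?thesis
      by (simp add: Fin fin_part_def)
  next
    case (Dir z)
    have "z \<in> D" "z \<noteq> 0"
      using dini_Dir_mem_cone[OF assms(1-3), of \<psi> y v 0] assms(4) e dini_Dir_nonzero
      by (simp_all add: Dir)
    then show ?thesis
      by (simp add: Dir inf_part_def)
  qed
qed

lemma dini_Fin_diff_mem:
  assumes "closed C" "0 < T"
    and "\<And>s s'. 0 < s \<Longrightarrow> s \<le> s' \<Longrightarrow> s' \<le> T \<Longrightarrow> diff_quot \<psi> y v s' - diff_quot \<psi> y v s \<in> C"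
    and "Fin z \<in> dini \<psi> y v" "Fin w \<in> dini \<psi> y v"
  shows "z - w \<in> (C :: 'z set)"
proof -
  obtain \<sigma> where \<sigma>: "\<forall>i. \<sigma> i > 0" "\<sigma> \<longlonglongrightarrow> 0" "(\<lambda>i. diff_quot \<psi> y v (\<sigma> i)) \<longlonglongrightarrow> z"
    using assms(4) unfolding dini_diff_quot by (auto simp: ext_conv_def)
  obtain \<tau> where \<tau>: "\<forall>i. \<tau> i > 0" "\<tau> \<longlonglongrightarrow> 0" "(\<lambda>i. diff_quot \<psi> y v (\<tau> i)) \<longlonglongrightarrow> w"
    using assms(5) unfolding dini_diff_quot by (auto simp: ext_conv_def)
  show ?thesis
    by (rule mono_tendsto_diff_mem[OF assms(1,2) _ _ _ \<sigma>(2) \<tau>(2) \<sigma>(3) \<tau>(3)])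
      (use assms(3) \<sigma>(1) \<tau>(1) in auto)
qed

lemma dini_subset_lineality_union_compl:
  assumes "closed C" "convex_cone C" "0 < T"
    and mono: "\<And>s s'. 0 < s \<Longrightarrow> s \<le> s' \<Longrightarrow> s' \<le> T \<Longrightarrow> diff_quot \<psi> y v s' - diff_quot \<psi> y v s \<in> C"
    and lower: "\<And>s. 0 < s \<Longrightarrow> s \<le> T \<Longrightarrow> diff_quot \<psi> y v s - a \<in> C"
    and not_subset: "\<not> dini \<psi> y v \<subseteq> fin_part C \<union> inf_part C"
  shows "dini \<psi> y v \<subseteq> inf_part (C \<inter> uminus ` C) \<union> fin_part (- (C :: 'z set))"
proof
  have "cone C"
    using \<open>convex_cone C\<close> by (simp add: convex_cone_def conic_def cone_def)
  have Dir_mem: "z \<in> C \<inter> uminus ` C" if "Dir z \<in> dini \<psi> y v" for z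
  proof
    show "z \<in> C"
      by (rule dini_Dir_mem_cone[OF \<open>closed C\<close> \<open>cone C\<close> \<open>0 < T\<close> lower that])
    have "uminus ` C = uminus -` C"
      by force
    moreover have "continuous_on UNIV (\<lambda>u::'z. (-1) *\<^sub>R u)"
      by (intro lctvs_continuous_on_scaleR continuous_on_const continuous_on_id)
    ultimately have "closed (uminus ` C)"
      using closed_vimage[OF \<open>closed C\<close>, of uminus] by simp
    moreover have "cone (uminus ` C)"
      using \<open>cone C\<close> conic_negations[of C] by (simp add: conic_def cone_def)
    moreover have "diff_quot \<psi> y v s - diff_quot \<psi> y v T \<in> uminus ` C" if "0 < s" "s \<le> T" for s
      using mono[OF that order_refl] by (force intro: image_eqI)
    ultimately show "z \<in> uminus ` C"
      using dini_Dir_mem_cone[OF _ _ \<open>0 < T\<close> _ that] by blast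
  qed
  obtain w where w: "Fin w \<in> dini \<psi> y v" "w \<notin> C"
  proof -
    obtain e where e: "e \<in> dini \<psi> y v" "e \<notin> fin_part C \<union> inf_part C"
      using not_subset by blast
    show ?thesis
    proof (cases e)
      case (Fin w)
      then have "w \<notin> C"
        using e(2) by (auto simp: fin_part_def)
      then show ?thesis
        using that e(1) Fin by blast
    next
      case (Dir z)
      then have "z \<in> C" "z \<noteq> 0"
        using e(1) Dir_mem dini_Dir_nonzero by blast+
      then show ?thesis
        using e(2) Dir by (simp add: inf_part_def)
    qed
  qed
  fix e assume e: "e \<in> dini \<psi> y v"
  show "e \<in> inf_part (C \<inter> uminus ` C) \<union> fin_part (- C)"
  proof (cases e)
    case (Fin z)
    have "w - z \<in> C"
      using dini_Fin_diff_mem[OF \<open>closed C\<close> \<open>0 < T\<close> mono] w(1) e Fin by simp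
    then have "z \<notin> C"
      using w(2) convex_cone_add[OF \<open>convex_cone C\<close>, of "w - z" z] by auto
    then show ?thesis
      by (simp add: Fin fin_part_def)
  next
    case (Dir z)
    then have "z \<in> C \<inter> uminus ` C" "z \<noteq> 0"
      using e Dir_mem dini_Dir_nonzero by blast+
    then show ?thesis
      by (simp add: Dir inf_part_def)
  qed
qed

lemma diff_quot_half_not_mem:
  assumes "closed C" "convex_cone C" "C_convex C S \<psi>" "x0 \<in> S" "x \<in> S"
    and hyp: "\<psi> (x0 + (1/2) *\<^sub>R (x - x0)) \<noteq> \<psi> x0 \<Longrightarrow>
      \<not> dini \<psi> (x0 + (1/2) *\<^sub>R (x - x0)) (x0 - x) \<subseteq> fin_part C \<union> inf_part C"
    and "psiC C S \<psi> x \<noteq> psiC C S \<psi> x0"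
  shows "diff_quot \<psi> x (x0 - x) (1/2) \<notin> (C :: 'z set)"
proof
  let ?m = "x0 + (1/2::real) *\<^sub>R (x - x0)"
  have m: "?m = x + (1/2::real) *\<^sub>R (x0 - x)" "?m + (1/2::real) *\<^sub>R (x0 - x) = x0"
    using scaleR_collapse[of "1/2" "x0 - x"] by (simp_all add: algebra_simps)
  assume "diff_quot \<psi> x (x0 - x) (1/2) \<in> C"
  then have half: "2 *\<^sub>R (\<psi> ?m - \<psi> x) \<in> C"
    by (simp add: diff_quot_def m(1))
  show False
  proof (cases "\<psi> ?m = \<psi> x0")
    case True
    have "\<psi> x0 - \<psi> x \<in> C"
      using convex_cone_scaleR[OF assms(2), of "1/2" "2 *\<^sub>R (\<psi> ?m - \<psi> x)"] half True by simp
    moreover have "2 *\<^sub>R ((1 - 1/2) *\<^sub>R \<psi> x + (1/2::real) *\<^sub>R \<psi> x0 - \<psi> ?m) \<in> C"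
      unfolding m(1) by (rule convex_cone_scaleR[OF assms(2) _ C_convexD[OF assms(3,5,4)]]) simp_all
    then have "\<psi> x - \<psi> x0 \<in> C"
      using True by (simp add: algebra_simps scaleR_2)
    ultimately have "psiC C S \<psi> x = psiC C S \<psi> x0"
      using psiC_subset_psiC[OF assms(2,5,4), of \<psi> 0] psiC_subset_psiC[OF assms(2,4,5), of \<psi> 0]
      by (simp add: subset_antisym)
    then show False
      using assms(7) by simp
  next
    case False
    have "cone C"
      using assms(2) by (simp add: convex_cone_def conic_def cone_def)
    have "dini \<psi> ?m (x0 - x) \<subseteq> fin_part C \<union> inf_part C"
    proof (rule dini_subset_cone[OF assms(1) \<open>cone C\<close>, of "1/2"])
      fix s :: real assume "0 < s" "s \<le> 1/2"
      then have "diff_quot \<psi> ?m (x0 - x) s - (1 / (1/2)) *\<^sub>R (\<psi> ?m - \<psi> x) \<in> C"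
        using m by (intro diff_quot_ge_backward_quot[OF assms(3,2,5), of _ "1/2"]) (simp_all add: assms(4))
      then show "diff_quot \<psi> ?m (x0 - x) s \<in> C"
        using convex_cone_add[OF assms(2) _ half] by fastforce
    qed simp
    then show False
      using hyp False by blast
  qed
qed


lemma minty_sol_psiC:
  assumes "closed (C :: 'z set)" "convex_cone C" "C_convex C S \<psi>" "x0 \<in> S"
    and hyp: "\<And>x. x \<in> S \<Longrightarrow> \<psi> (x0 + (1/2) *\<^sub>R (x - x0)) \<noteq> \<psi> x0 \<Longrightarrow>
      \<not> dini \<psi> (x0 + (1/2) *\<^sub>R (x - x0)) (x0 - x) \<subseteq> fin_part C \<union> inf_part C"
  shows "minty_sol (psiC C S \<psi>) x0"
  unfolding minty_sol_def
proof (intro allI impI)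
  fix x assume neq: "psiC C S \<psi> x \<noteq> psiC C S \<psi> x0"
  show "\<not> sv_deriv (psiC C S \<psi>) x (x0 - x) \<subseteq> rec_cone (psiC C S \<psi> x)"
  proof (cases "x \<in> S")
    case True
    have "convex S"
      using assms(3) by (rule C_convex_imp_convex)
    then have "x + (1/2::real) *\<^sub>R (x0 - x) \<in> S"
      using convex_segment_mem[OF _ True assms(4)] by simp
    then have "diff_quot \<psi> x (x0 - x) (1/2) \<in> sv_deriv (psiC C S \<psi>) x (x0 - x)"
      by (rule diff_quot_mem_sv_deriv_psiC[OF assms(3,2) True]) simp
    moreover have "diff_quot \<psi> x (x0 - x) (1/2) \<notin> C"
      using diff_quot_half_not_mem[OF assms(1-4) True hyp[OF True] neq] .
    ultimately show ?thesis
      using rec_cone_psiC_subset[OF convex_cone_contains_0[OF assms(2)] True] by blast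
  next
    case False
    then have "psiC C S \<psi> x = {}"
      by (simp add: psiC_def)
    then show ?thesis
      using zero_mem_sv_deriv_if_empty[of "psiC C S \<psi>" x "x0 - x"] by (auto simp: rec_cone_def)
  qed
qed

lemma dini_segment_subset_lineality_union_compl:
  assumes "closed C" "convex_cone C" "C_convex C S \<psi>" "x0 \<in> S" "x \<in> S" "0 < t" "t < 1"
    and "\<not> dini \<psi> (x0 + t *\<^sub>R (x - x0)) (x0 - x) \<subseteq> fin_part C \<union> inf_part C"
  shows "dini \<psi> (x0 + t *\<^sub>R (x - x0)) (x0 - x) \<subseteq> inf_part (C \<inter> uminus ` C) \<union> fin_part (- (C :: 'z set))"
proof -
  let ?y = "x0 + t *\<^sub>R (x - x0)"
  have y: "?y + t *\<^sub>R (x0 - x) = x0" "?y = x + (1 - t) *\<^sub>R (x0 - x)"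
    by (simp_all add: algebra_simps)
  have "convex S"
    using assms(3) by (rule C_convex_imp_convex)
  then have "?y \<in> S"
    using convex_segment_mem[OF _ assms(4,5)] assms(6,7) by simp
  have "?y + t *\<^sub>R (x0 - x) \<in> S"
    unfolding y(1) by (rule assms(4))
  show ?thesis
  proof (rule dini_subset_lineality_union_compl[OF assms(1,2,6) _ _ assms(8)])
    show "diff_quot \<psi> ?y (x0 - x) s' - diff_quot \<psi> ?y (x0 - x) s \<in> C"
      if "0 < s" "s \<le> s'" "s' \<le> t" for s s'
      by (rule diff_quot_mono[OF assms(3,2) \<open>?y \<in> S\<close> \<open>?y + t *\<^sub>R (x0 - x) \<in> S\<close> that])
    show "diff_quot \<psi> ?y (x0 - x) s - (1 / (1 - t)) *\<^sub>R (\<psi> ?y - \<psi> x) \<in> C"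
      if "0 < s" "s \<le> t" for s
      using diff_quot_ge_backward_quot[OF assms(3,2,5) \<open>?y + t *\<^sub>R (x0 - x) \<in> S\<close> y(2) _ that] assms(7)
      by simp
  qed
qed

end

theorem mainTheorem15:
  fixes C :: "'z::{real_vector,t2_space} set"
    and S :: "'x::real_vector set"
    and \<psi> :: "'x \<Rightarrow> 'z"
    and x0 :: 'x
  assumes Z_lc: "lctvs TYPE('z)"
    and C_closed: "closed C" and C_convex_set: "convex C" and C_cone: "cone C" and C_zero: "0 \<in> C"
    and C_polar: "neg_polar C - {\<lambda>_. 0} \<noteq> {}"
    and psi_conv: "C_convex C S \<psi>"
    and x0S: "x0 \<in> S"
    and hyp: "\<And>x t. x \<in> S \<Longrightarrow> 0 < t \<Longrightarrow> t < 1 \<Longrightarrow>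
               \<psi> (x0 + t *\<^sub>R (x - x0)) \<noteq> \<psi> x0 \<Longrightarrow>
               \<not> dini \<psi> (x0 + t *\<^sub>R (x - x0)) (x0 - x) \<subseteq> fin_part C \<union> inf_part C"
  shows "minty_sol (psiC C S \<psi>) x0 \<and>
         (\<forall>x\<in>S. \<forall>t. 0 < t \<and> t < 1 \<longrightarrow>
            \<psi> (x0 + t *\<^sub>R (x - x0)) \<noteq> \<psi> x0 \<longrightarrow>
            dini \<psi> (x0 + t *\<^sub>R (x - x0)) (x0 - x)
              \<subseteq> inf_part (C \<inter> uminus ` C) \<union> fin_part (- C))"
proof -
  have cone: "convex_cone C"
    using C_convex_set C_cone C_zero by (auto simp: convex_cone_def conic_def cone_def)
  have "minty_sol (psiC C S \<psi>) x0"
    by (rule minty_sol_psiC[OF Z_lc C_closed cone psi_conv x0S]) (rule hyp; simp)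
  moreover have "dini \<psi> (x0 + t *\<^sub>R (x - x0)) (x0 - x) \<subseteq> inf_part (C \<inter> uminus ` C) \<union> fin_part (- C)"
    if "x \<in> S" "0 < t" "t < 1" "\<psi> (x0 + t *\<^sub>R (x - x0)) \<noteq> \<psi> x0" for x t
    using dini_segment_subset_lineality_union_compl[OF Z_lc C_closed cone psi_conv x0S that(1-3) hyp[OF that]] .
  ultimately show ?thesis
    by blast
qed

end
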